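(* Let $X$ be an $n$-dimensional toric Fano variety with fan $\Sigma_X$. Suppose that for every generator $x\in G(\Sigma_X)$ there are at most two primitive collections of order two containing $x$, and if there are exactly two, they are $\{x,-x\}$ and $\{x,y\}$ with $-y\notin G(\Sigma_X)$ and $-x-y\notin G(\Sigma_X)$. Then $\Sigma_X$ has at most $\frac{3}{4}f_0$ primitive collections of order two, i.e. $\binom{f_0}{2}-f_1\leq\frac34 f_0$, where $f_0$ is the number of rays and $f_1$ the number of $2$-dimensional cones of $\Sigma_X$.
   Context: $X$ is a smooth projective toric variety with ample anticanonical divisor, fan $\Sigma_X$, primitive ray generators $G(\Sigma_X)$. A primitive collection is a set of generators not spanning a cone of $\Sigma_X$ while every proper subset does; its order is its cardinality. (A set of two generators is a primitive collection exactly when they do not span a cone of $\Sigma_X$.) *)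

theory Defs
  imports "HOL-Analysis.Analysis"
begin

text \<open>A smooth toric Fano variety of dimension n = CARD('n) is encoded by its set V of
primitive ray generators G(Sigma_X), viewed as lattice points in real^'n.  The fan Sigma_X
is the face fan of the smooth Fano polytope conv V: V is finite, consists of lattice points,
is exactly the vertex set of conv V, the origin lies in the interior of conv V, and the
vertices on every facet of conv V form a Z-basis of the lattice Z^n.\<close>

definition lattice_point :: "real ^ 'n \<Rightarrow> bool" where
  "lattice_point x \<longleftrightarrow> (\<forall>i. x $ i \<in> \<int>)"

definition is_Z_basis :: "(real ^ 'n) set \<Rightarrow> bool" where
  "is_Z_basis B \<longleftrightarrow> finite B \<and> card B = CARD('n) \<and> (\<forall>b\<in>B. lattice_point b) \<and>
     (\<forall>x. lattice_point x \<longrightarrow> (\<exists>c. (\<forall>b\<in>B. c b \<in> \<int>) \<and> x = (\<Sum>b\<in>B. c b *\<^sub>R b)))"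

definition smooth_Fano_generators :: "(real ^ 'n) set \<Rightarrow> bool" where
  "smooth_Fano_generators V \<longleftrightarrow>
     finite V \<and> (\<forall>v\<in>V. lattice_point v) \<and>
     (\<forall>v\<in>V. v extreme_point_of (convex hull V)) \<and>
     0 \<in> interior (convex hull V) \<and>
     (\<forall>F. F facet_of (convex hull V) \<longrightarrow> is_Z_basis (V \<inter> F))"

text \<open>A subset S of the generators spans a cone of the (face) fan iff it lies on a proper
face, i.e. (the fan being simplicial) in a common facet of conv V.\<close>

definition spans_cone :: "(real ^ 'n) set \<Rightarrow> (real ^ 'n) set \<Rightarrow> bool" where
  "spans_cone V S \<longleftrightarrow> S \<subseteq> V \<and> (\<exists>F. F facet_of (convex hull V) \<and> S \<subseteq> F)"

definition primitive_collection :: "(real ^ 'n) set \<Rightarrow> (real ^ 'n) set \<Rightarrow> bool" where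
  "primitive_collection V S \<longleftrightarrow> S \<subseteq> V \<and> \<not> spans_cone V S \<and>
     (\<forall>T. T \<subset> S \<longrightarrow> spans_cone V T)"

definition prim_coll2 :: "(real ^ 'n) set \<Rightarrow> (real ^ 'n) set set" where
  "prim_coll2 V = {S. primitive_collection V S \<and> card S = 2}"

definition f0 :: "(real ^ 'n) set \<Rightarrow> nat" where
  "f0 V = card V"

definition f1 :: "(real ^ 'n) set \<Rightarrow> nat" where
  "f1 V = card {S. card S = 2 \<and> spans_cone V S}"

end

theory Submission
  imports Defs
begin

text \<open>View the order-two primitive collections as the edges of a graph on the generators, of
maximal degree two. If x has degree two, its second collection {x, y} joins it to a vertex y of
degree one: were y of degree two, the hypothesis at y would make {y, -y} a primitive collection,
so -y would be a generator. A degree-one vertex has only one neighbour, so x \<mapsto> y is injective and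
a2 \<le> a1, where ai counts the vertices of degree i. Counting edge ends, the number N of edges
satisfies 4 N = 2 a1 + 4 a2 \<le> 3 (a1 + a2) \<le> 3 f0. Since singletons span cones, a pair of
generators is a primitive collection exactly when it spans no cone, so N = binomial f0 2 - f1.\<close>

lemma card_doubletons_le_three_quarters:
  fixes V :: "'a set" and P :: "'a set set"
  assumes "finite V" and P: "P \<subseteq> {S. S \<subseteq> V \<and> card S = 2}"
    and deg_le: "\<And>x. x \<in> V \<Longrightarrow> card {S \<in> P. x \<in> S} \<le> 2"
    and partner: "\<And>x. x \<in> V \<Longrightarrow> card {S \<in> P. x \<in> S} = 2 \<Longrightarrow>
                    \<exists>y. {x, y} \<in> P \<and> card {S \<in> P. y \<in> S} = 1"
  shows "4 * card P \<le> 3 * card V"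
proof -
  define deg where "deg x = card {S \<in> P. x \<in> S}" for x
  define A1 where "A1 = {x \<in> V. deg x = 1}"
  define A2 where "A2 = {x \<in> V. deg x = 2}"
  have "P \<subseteq> Pow V"
    using P by blast
  then have "finite P"
    using finite_subset \<open>finite V\<close> by blast
  moreover have "\<forall>S\<in>P. card {x \<in> V. x \<in> S} = 2"
  proof
    fix S assume "S \<in> P"
    then have "{x \<in> V. x \<in> S} = S" using P by blast
    then show "card {x \<in> V. x \<in> S} = 2" using \<open>S \<in> P\<close> P by auto
  qed
  ultimately have handshake: "(\<Sum>x\<in>V. deg x) = 2 * card P"
    unfolding deg_def by (intro sum_multicount \<open>finite V\<close>)
  have "(\<Sum>x\<in>V. deg x) = (\<Sum>x\<in>V. of_bool (x \<in> A1) + 2 * of_bool (x \<in> A2))"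
    using deg_le by (intro sum.cong) (auto simp: A1_def A2_def deg_def le_Suc_eq numeral_2_eq_2)
  also have "\<dots> = card A1 + 2 * card A2"
    using \<open>finite V\<close> by (simp add: sum.distrib sum_distrib_left[symmetric] A1_def A2_def Int_def)
  finally have degree_split: "(\<Sum>x\<in>V. deg x) = card A1 + 2 * card A2" .
  have "\<forall>x\<in>A2. \<exists>y. {x, y} \<in> P \<and> y \<in> A1"
    using partner P unfolding A1_def A2_def deg_def by fastforce
  then obtain f where f: "\<And>x. x \<in> A2 \<Longrightarrow> {x, f x} \<in> P \<and> f x \<in> A1"
    by metis
  have two_elements: "x \<noteq> f x" if "x \<in> A2" for x
  proof
    assume "x = f x"
    then have "card {x} = 2" using f[OF that] P by auto
    then show False by simp
  qed
  have "inj_on f A2"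
  proof
    fix x x' assume x: "x \<in> A2" and x': "x' \<in> A2" and eq: "f x = f x'"
    have "card {S \<in> P. f x \<in> S} = 1"
      using f[OF x] unfolding A1_def deg_def by auto
    then obtain T where T: "{S \<in> P. f x \<in> S} = {T}"
      by (rule card_1_singletonE)
    have "{x, f x} \<in> {S \<in> P. f x \<in> S}" "{x', f x} \<in> {S \<in> P. f x \<in> S}"
      using f[OF x] f[OF x'] eq by auto
    then have "{x, f x} = {x', f x}"
      unfolding T by simp
    then show "x = x'"
      using two_elements[OF x] two_elements[OF x'] eq by (auto simp: doubleton_eq_iff)
  qed
  then have "card A2 \<le> card A1"
    using f \<open>finite V\<close> by (intro card_inj_on_le) (auto simp: A1_def)
  moreover have "card A1 + card A2 \<le> card V"
    using \<open>finite V\<close> by (subst card_Un_disjoint[symmetric]) (auto simp: A1_def A2_def intro: card_mono)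
  ultimately show ?thesis
    using handshake degree_split by linarith
qed

lemma degree_two_has_degree_one_partner:
  fixes V :: "'a::uminus set" and P :: "'a set set"
  assumes "finite P" "P \<subseteq> Pow V"
    and deg_le: "\<And>x. x \<in> V \<Longrightarrow> card {S \<in> P. x \<in> S} \<le> 2"
    and shape: "\<And>x. x \<in> V \<Longrightarrow> card {S \<in> P. x \<in> S} = 2 \<Longrightarrow>
                  \<exists>y. {S \<in> P. x \<in> S} = {{x, -x}, {x, y}} \<and> -y \<notin> V"
    and "x \<in> V" "card {S \<in> P. x \<in> S} = 2"
  shows "\<exists>y. {x, y} \<in> P \<and> card {S \<in> P. y \<in> S} = 1"
proof -
  obtain y where y: "{S \<in> P. x \<in> S} = {{x, -x}, {x, y}}" "-y \<notin> V"
    using shape \<open>x \<in> V\<close> \<open>card {S \<in> P. x \<in> S} = 2\<close> by blast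
  then have xy: "{x, y} \<in> P" by blast
  then have "y \<in> V" using \<open>P \<subseteq> Pow V\<close> by auto
  have "card {S \<in> P. y \<in> S} \<noteq> 0"
    using xy \<open>finite P\<close> by (auto simp: card_eq_0_iff)
  moreover have "card {S \<in> P. y \<in> S} \<noteq> 2"
  proof
    assume "card {S \<in> P. y \<in> S} = 2"
    then obtain z where "{S \<in> P. y \<in> S} = {{y, -y}, {y, z}}"
      using shape \<open>y \<in> V\<close> by blast
    then have "{y, -y} \<in> P" by blast
    then show False using \<open>P \<subseteq> Pow V\<close> y(2) by auto
  qed
  ultimately have "card {S \<in> P. y \<in> S} = 1"
    using deg_le[OF \<open>y \<in> V\<close>] by linarith
  with xy show ?thesis by blast
qed

lemma extreme_point_in_facet:
  fixes S :: "'a::euclidean_space set"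
  assumes "polyhedron S" "v extreme_point_of S" "S \<noteq> {v}"
  obtains F where "F facet_of S" "v \<in> F"
proof -
  have "{v} face_of S"
    using assms(2) by (simp add: face_of_singleton)
  then show ?thesis
    using face_of_polyhedron_subset_facet[OF assms(1)] assms(3) that by blast
qed

lemma spans_cone_singleton:
  assumes "smooth_Fano_generators V" "v \<in> V"
  shows "spans_cone V {v}"
proof -
  have "finite V" "v extreme_point_of convex hull V" "0 \<in> interior (convex hull V)"
    using assms unfolding smooth_Fano_generators_def by auto
  moreover from this have "polyhedron (convex hull V)"
    by (intro polytope_imp_polyhedron) (auto simp: polytope_def)
  moreover have "convex hull V \<noteq> {v}"
    using \<open>0 \<in> interior (convex hull V)\<close> by auto
  ultimately obtain F where "F facet_of convex hull V" "v \<in> F"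
    by (blast elim: extreme_point_in_facet)
  then show ?thesis
    using assms(2) unfolding spans_cone_def by blast
qed

lemma prim_coll2_iff_not_spans_cone:
  assumes "smooth_Fano_generators V" "S \<subseteq> V" "card S = 2"
  shows "S \<in> prim_coll2 V \<longleftrightarrow> \<not> spans_cone V S"
proof -
  have "spans_cone V T" if "T \<subset> S" for T
  proof -
    obtain a b where "S = {a, b}"
      using assms(3) by (meson card_2_iff)
    then have "T \<subseteq> {a} \<or> T \<subseteq> {b}"
      using that by blast
    then obtain v where "v \<in> S" "T \<subseteq> {v}"
      using \<open>S = {a, b}\<close> by blast
    then show ?thesis
      using spans_cone_singleton[OF assms(1), of v] assms(2) unfolding spans_cone_def by blast
  qed
  then show ?thesis
    using assms unfolding prim_coll2_def primitive_collection_def by blast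
qed

lemma f1_add_card_prim_coll2:
  assumes "smooth_Fano_generators V"
  shows "f1 V + card (prim_coll2 V) = f0 V choose 2"
proof -
  have "finite V"
    using assms unfolding smooth_Fano_generators_def by blast
  have "S \<in> prim_coll2 V \<or> spans_cone V S" if "S \<subseteq> V" "card S = 2" for S
    using prim_coll2_iff_not_spans_cone[OF assms that] by blast
  then have pairs: "{S. S \<subseteq> V \<and> card S = 2}
      = {S. card S = 2 \<and> spans_cone V S} \<union> prim_coll2 V"
    by (auto simp: spans_cone_def prim_coll2_def primitive_collection_def)
  have "finite {S. S \<subseteq> V \<and> card S = 2}"
    using \<open>finite V\<close> by simp
  then have "card {S. S \<subseteq> V \<and> card S = 2}
      = card {S. card S = 2 \<and> spans_cone V S} + card (prim_coll2 V)"
    unfolding pairs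
    by (intro card_Un_disjoint) (auto simp: prim_coll2_def primitive_collection_def)
  then show ?thesis
    using n_subsets[OF \<open>finite V\<close>, of 2] by (simp add: f0_def f1_def)
qed

theorem lemma3p4:
  fixes V :: "(real ^ 'n) set"
  assumes "smooth_Fano_generators V"
    and "\<forall>x\<in>V. card {S \<in> prim_coll2 V. x \<in> S} \<le> 2"
    and "\<forall>x\<in>V. card {S \<in> prim_coll2 V. x \<in> S} = 2 \<longrightarrow>
           (\<exists>y. {S \<in> prim_coll2 V. x \<in> S} = {{x, -x}, {x, y}} \<and> -y \<notin> V \<and> -x - y \<notin> V)"
  shows "real (card (prim_coll2 V)) \<le> 3/4 * real (f0 V)
       \<and> real (f0 V choose 2) - real (f1 V) \<le> 3/4 * real (f0 V)"
proof -
  have "finite V"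
    using assms(1) unfolding smooth_Fano_generators_def by blast
  have pairs: "prim_coll2 V \<subseteq> {S. S \<subseteq> V \<and> card S = 2}"
    by (auto simp: prim_coll2_def primitive_collection_def)
  then have "prim_coll2 V \<subseteq> Pow V"
    by blast
  then have "finite (prim_coll2 V)"
    using finite_subset \<open>finite V\<close> by blast
  have deg_le: "\<And>x. x \<in> V \<Longrightarrow> card {S \<in> prim_coll2 V. x \<in> S} \<le> 2"
    using assms(2) by blast
  have shape: "\<And>x. x \<in> V \<Longrightarrow> card {S \<in> prim_coll2 V. x \<in> S} = 2 \<Longrightarrow>
      \<exists>y. {S \<in> prim_coll2 V. x \<in> S} = {{x, -x}, {x, y}} \<and> -y \<notin> V"
    using assms(3) by blast
  have "4 * card (prim_coll2 V) \<le> 3 * card V"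
    using card_doubletons_le_three_quarters[OF \<open>finite V\<close> pairs deg_le]
      degree_two_has_degree_one_partner[OF \<open>finite (prim_coll2 V)\<close> \<open>prim_coll2 V \<subseteq> Pow V\<close>
        deg_le shape]
    by blast
  then have "real (card (prim_coll2 V)) \<le> 3/4 * real (card V)"
    by linarith
  moreover have "real (f1 V) + real (card (prim_coll2 V)) = real (f0 V choose 2)"
    using f1_add_card_prim_coll2[OF assms(1)] by (metis of_nat_add)
  ultimately show ?thesis
    unfolding f0_def by linarith
qed

end
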